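(* Let $(M,J)$ be an almost complex manifold and $\nabla$ a connection on $M$. Then: (1) in local coordinates $(x_1,\dots,x_n,p_1,\dots,p_n)$ on $T^*M$, with respect to the basis $(\partial_{x},\partial_p)$, $J^{G,\nabla}$ has block matrix with upper-left block $(J^i_j)$, upper-right block $0$, lower-left block with entries $\Gamma_{l,i}J^l_j-\Gamma_{j,l}J^l_i$, and lower-right block $(J^j_i)$ (i.e. the transpose of $J$); (2) $J^{G,\nabla}=J^c+\gamma(S)$, where $S(X,Y)=-(\nabla J)(X,Y)+(\nabla J)(Y,X)+T(JX,Y)-JT(X,Y)$ and $T$ is the torsion of $\nabla$.
   Context: $J=J^k_ldx^l\otimes\partial_{x_k}$ with $J^2=-\mathrm{Id}$; Einstein summation. Christoffel symbols: $\nabla_{\partial_{x_i}}\partial_{x_j}=\Gamma^k_{i,j}\partial_{x_k}$, and $\Gamma_{i,j}:=p_k\Gamma^k_{i,j}$. Torsion $T(X,Y)=\nabla_XY-\nabla_YX-[X,Y]$; $(\nabla J)(X,Y)=\nabla_X(JY)-J\nabla_XY$. The induced connection on $T^*M$ is $(\nabla_Xs)(Y)=X(s(Y))-s(\nabla_XY)$; $H^\nabla_\xi=\{d_xs(X): X\in T_xM,\ s(x)=\xi,\ \nabla_Xs=0\}$, $T_\xi T^*M=H^\nabla_\xi\oplus T^*_xM$, $v^\nabla$ the projection onto $T^*_xM$ along $H^\nabla_\xi$. The generalized horizontal lift is $J^{G,\nabla}(X,v^\nabla(Y))=(JX,{}^tJ(v^\nabla(Y)))$ with $JX:=(d_\xi\pi|_{H^\nabla_\xi})^{-1}(J(x)d_\xi\pi(X))$.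 For $R=R^k_{ij}dx^i\otimes dx^j\otimes\partial_{x_k}$, $\gamma(R):=p_kR^k_{ij}dx^i\otimes\partial_{p_j}$. The complete lift $J^c$ is defined by $d(\theta(J))=\omega_{st}(J^c\cdot,\cdot)$ with $\theta(J)=p_kJ^k_ldx^l$, $\omega_{st}=d(p_idx^i)$; locally its block matrix has upper-left $J^i_j$, upper-right $0$, lower-left $p_k(\partial_{x_j}J^k_i-\partial_{x_i}J^k_j)$, lower-right $J^j_i$. *)

theory Defs
  imports "HOL-Analysis.Analysis"
begin

text \<open>Everything is expressed in one coordinate chart: points of M are x :: real^'n
 (chart domain an open set U), covectors are p :: real^'n (components p_k), and a
 tangent vector of T*M at (x,p) is a pair (a, alpha) :: real^'n * real^'n of
 components w.r.t. the basis (d/dx, d/dp).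
 Conventions: J x $ k $ l = J^k_l(x);  Gam x k i j = Gamma^k_{i,j}(x).\<close>

type_synonym 'n almost_cx = "real^'n \<Rightarrow> real^'n^'n"
type_synonym 'n christoffel = "real^'n \<Rightarrow> 'n \<Rightarrow> 'n \<Rightarrow> 'n \<Rightarrow> real"

definition e :: "'n::finite \<Rightarrow> real^'n" where
  "e i = axis i 1"

definition chr :: "'n::finite christoffel \<Rightarrow> real^'n \<Rightarrow> real^'n \<Rightarrow> real^'n \<Rightarrow> real^'n" where
  "chr Gam x u v = (\<chi> k. \<Sum>i\<in>UNIV. \<Sum>j\<in>UNIV. Gam x k i j * u $ i * v $ j)"

definition cov :: "'n::finite christoffel \<Rightarrow> (real^'n \<Rightarrow> real^'n) \<Rightarrow> real^'n \<Rightarrow> real^'n \<Rightarrow> real^'n" where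
  "cov Gam Y x u = frechet_derivative Y (at x) u + chr Gam x u (Y x)"

text \<open>Induced covariant derivative of a 1-form (section of T*M) s along u at x:
  (nabla_u s)(d/dx_j) = u(s_j) - s(nabla_u d/dx_j).\<close>
definition cov_co :: "'n::finite christoffel \<Rightarrow> (real^'n \<Rightarrow> real^'n) \<Rightarrow> real^'n \<Rightarrow> real^'n \<Rightarrow> real^'n" where
  "cov_co Gam s x u = (\<chi> j. frechet_derivative s (at x) u $ j
        - (\<Sum>k\<in>UNIV. s x $ k * chr Gam x u (e j) $ k))"

definition horiz :: "'n::finite christoffel \<Rightarrow> real^'n \<Rightarrow> real^'n \<Rightarrow> ((real^'n) \<times> (real^'n)) set" where
  "horiz Gam x p = {(u, frechet_derivative s (at x) u) | u s.
       s differentiable (at x) \<and> s x = p \<and> cov_co Gam s x u = 0}"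

definition Jhor :: "'n::finite christoffel \<Rightarrow> 'n almost_cx \<Rightarrow> real^'n \<Rightarrow> real^'n
     \<Rightarrow> (real^'n) \<times> (real^'n) \<Rightarrow> (real^'n) \<times> (real^'n)" where
  "Jhor Gam J x p X = (THE Y. Y \<in> horiz Gam x p \<and> fst Y = J x *v fst X)"

definition JG :: "'n::finite christoffel \<Rightarrow> 'n almost_cx \<Rightarrow> real^'n \<Rightarrow> real^'n
     \<Rightarrow> (real^'n) \<times> (real^'n) \<Rightarrow> (real^'n) \<times> (real^'n)" where
  "JG Gam J x p Z = (THE W. \<exists>X V. X \<in> horiz Gam x p \<and> fst V = 0 \<and> Z = X + V \<and>
       W = Jhor Gam J x p X + (0, transpose (J x) *v snd V))"

text \<open>d(theta(J)) at (x,p), theta(J) = p_k J^k_l dx^l, with (a wedge b)(A,B) = a(A)b(B) - a(B)b(A).\<close>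
definition dtheta :: "'n::finite almost_cx \<Rightarrow> real^'n \<Rightarrow> real^'n
     \<Rightarrow> (real^'n) \<times> (real^'n) \<Rightarrow> (real^'n) \<times> (real^'n) \<Rightarrow> real" where
  "dtheta J x p A B =
     (let df = (\<lambda>l (a::real^'n, \<alpha>::real^'n).
          (\<Sum>k\<in>UNIV. p $ k * frechet_derivative J (at x) a $ k $ l)
          + (\<Sum>k\<in>UNIV. \<alpha> $ k * J x $ k $ l))
      in \<Sum>l\<in>UNIV. df l A * fst B $ l - df l B * fst A $ l)"

text \<open>omega_st = d(p_i dx^i) = dp_i wedge dx^i.\<close>
definition omega_st :: "(real^'n::finite) \<times> (real^'n) \<Rightarrow> (real^'n) \<times> (real^'n) \<Rightarrow> real" where
  "omega_st A B = (\<Sum>i\<in>UNIV. snd A $ i * fst B $ i - snd B $ i * fst A $ i)"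

definition Jc :: "'n::finite almost_cx \<Rightarrow> real^'n \<Rightarrow> real^'n
     \<Rightarrow> (real^'n) \<times> (real^'n) \<Rightarrow> (real^'n) \<times> (real^'n)" where
  "Jc J x p A = (THE C. \<forall>B. dtheta J x p A B = omega_st C B)"

definition torsion_field :: "'n::finite christoffel \<Rightarrow> (real^'n \<Rightarrow> real^'n)
     \<Rightarrow> (real^'n \<Rightarrow> real^'n) \<Rightarrow> real^'n \<Rightarrow> real^'n" where
  "torsion_field Gam X Y x = cov Gam Y x (X x) - cov Gam X x (Y x)
      - (frechet_derivative Y (at x) (X x) - frechet_derivative X (at x) (Y x))"

definition nablaJ_field :: "'n::finite christoffel \<Rightarrow> 'n almost_cx \<Rightarrow> (real^'n \<Rightarrow> real^'n)
     \<Rightarrow> (real^'n \<Rightarrow> real^'n) \<Rightarrow> real^'n \<Rightarrow> real^'n" where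
  "nablaJ_field Gam J X Y x = cov Gam (\<lambda>y. J y *v Y y) x (X x) - J x *v cov Gam Y x (X x)"

definition S_tensor :: "'n::finite christoffel \<Rightarrow> 'n almost_cx \<Rightarrow> real^'n
     \<Rightarrow> real^'n \<Rightarrow> real^'n \<Rightarrow> real^'n" where
  "S_tensor Gam J x u v =
     - nablaJ_field Gam J (\<lambda>_. u) (\<lambda>_. v) x + nablaJ_field Gam J (\<lambda>_. v) (\<lambda>_. u) x
     + torsion_field Gam (\<lambda>y. J y *v u) (\<lambda>_. v) x
     - J x *v torsion_field Gam (\<lambda>_. u) (\<lambda>_. v) x"

definition gamma_op :: "(real^'n::finite \<Rightarrow> real^'n \<Rightarrow> real^'n) \<Rightarrow> real^'n \<Rightarrow> (real^'n) \<times> (real^'n) \<Rightarrow> (real^'n) \<times> (real^'n)" where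
  "gamma_op R p A = (0, \<chi> j. \<Sum>i\<in>UNIV. \<Sum>k\<in>UNIV. p $ k * (R (e i) (e j)) $ k * fst A $ i)"

definition Gp :: "'n::finite christoffel \<Rightarrow> real^'n \<Rightarrow> real^'n \<Rightarrow> 'n \<Rightarrow> 'n \<Rightarrow> real" where
  "Gp Gam x p i j = (\<Sum>k\<in>UNIV. p $ k * Gam x k i j)"

end

theory Submission
  imports Defs
begin

text \<open>Write \<Gamma> for the matrix \<Gamma>_{i,j} = p_k \<Gamma>^k_{i,j} at (x,p). The condition \<nabla>_u s = 0 on a
  section with s(x) = p says exactly that ds(u) = u\<Gamma>, and affine sections realise every such
  value, so H^\<nabla> is the graph of u \<mapsto> u\<Gamma>. Splitting (a,\<alpha>) as (a, a\<Gamma>) + (0, \<alpha> - a\<Gamma>) gives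
  J^{G,\<nabla>}(a,\<alpha>) = (Ja, (Ja)\<Gamma> + (\<alpha> - a\<Gamma>)J), which is (1). Since \<omega>_st is nondegenerate, J^c
  is read off from the explicit value of d(\<theta>(J)). For (2), p \<bullet> S(a, e_j) splits into derivative
  terms of J, which cancel those of J^c, and Christoffel terms, which produce (Ja)\<Gamma> - a\<Gamma>J.
  All identities are pointwise: only the differentiability of J at x is used, not J^2 = -1 nor
  the openness of U.\<close>

lemma inner_e: "v \<bullet> e i = v $ i" "e i \<bullet> v = v $ i"
  by (simp_all add: e_def cart_eq_inner_axis inner_commute)

lemma inner_matrix_vector_e: "x \<bullet> (M *v e j) = (x v* M) $ j"
  by (simp add: dot_lmul_matrix[symmetric] inner_e)

lemma linear_functional_eq_inner:
  fixes f :: "real^'n::finite \<Rightarrow> real"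
  assumes "linear f"
  shows "f b = (\<chi> i. f (e i)) \<bullet> b"
proof -
  have "f b = f (\<Sum>i\<in>UNIV. b $ i *\<^sub>R e i)"
    using basis_expansion[of b] by (simp add: e_def scalar_mult_eq_scaleR)
  also have "\<dots> = (\<chi> i. f (e i)) \<bullet> b"
    by (simp add: linear_sum[OF assms] linear_scale[OF assms] inner_vec_def mult.commute)
  finally show ?thesis .
qed

lemma vector_matrix_mult_diff_rdistrib: "(x - y) v* A = x v* A - y v* (A::'a::comm_ring_1^'n^'m)"
  by (simp add: vector_matrix_mult_def vec_eq_iff algebra_simps sum_subtractf)

lemma vector_matrix_mul_bounded_linear: "bounded_linear (\<lambda>h. h v* (M::real^'n::finite^'m::finite))"
proof -
  have "(\<lambda>h. h v* M) = (*v) (transpose M)" by (simp add: fun_eq_iff)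
  then show ?thesis by simp
qed

lemma matrix_vector_mul_bounded_linear_left: "bounded_linear (\<lambda>M::real^'n::finite^'m::finite. M *v v)"
proof -
  have "linear (\<lambda>M::real^'n^'m. M *v v)"
    by (rule linearI) (simp_all add: matrix_vector_mult_def vec_eq_iff algebra_simps sum.distrib sum_distrib_left)
  then show ?thesis by (simp add: linear_conv_bounded_linear)
qed

lemma linear_inner_matrix_apply:
  fixes D :: "real^'m::finite \<Rightarrow> real^'n::finite^'k::finite"
  assumes "linear D"
  shows "linear (\<lambda>b. p \<bullet> (D b *v a))"
  by (rule linearI) (simp_all add: linear_add[OF assms] linear_scale[OF assms] matrix_vector_mult_def
      inner_vec_def inner_real_def algebra_simps sum.distrib sum_distrib_left)

lemma frechet_derivative_matrix_vector_mult:
  fixes J :: "'a::real_normed_vector \<Rightarrow> real^'n::finite^'m::finite"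
  assumes "J differentiable (at x)"
  shows "frechet_derivative (\<lambda>y. J y *v v) (at x) = (\<lambda>h. frechet_derivative J (at x) h *v v)"
  using bounded_linear.has_derivative[OF matrix_vector_mul_bounded_linear_left frechet_derivative_works[THEN iffD1, OF assms]]
  by (rule frechet_derivative_at[symmetric])

definition connection_matrix :: "'n::finite christoffel \<Rightarrow> real^'n \<Rightarrow> real^'n \<Rightarrow> real^'n^'n" where
  "connection_matrix Gam x p = (\<chi> i j. Gp Gam x p i j)"

lemma inner_chr: "p \<bullet> chr Gam x u w = u \<bullet> (connection_matrix Gam x p *v w)"
proof -
  have "p \<bullet> chr Gam x u w = (\<Sum>k\<in>UNIV. \<Sum>i\<in>UNIV. \<Sum>l\<in>UNIV. p $ k * Gam x k i l * u $ i * w $ l)"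
    by (simp add: chr_def inner_vec_def sum_distrib_left mult.assoc)
  also have "\<dots> = (\<Sum>i\<in>UNIV. \<Sum>l\<in>UNIV. \<Sum>k\<in>UNIV. p $ k * Gam x k i l * u $ i * w $ l)"
    by (subst sum.swap) (rule sum.cong[OF refl], rule sum.swap)
  also have "\<dots> = u \<bullet> (connection_matrix Gam x p *v w)"
    by (simp add: connection_matrix_def Gp_def matrix_vector_mult_def inner_vec_def sum_distrib_left sum_distrib_right mult_ac)
  finally show ?thesis .
qed

lemma cov_co_eq: "cov_co Gam s x u = frechet_derivative s (at x) u - u v* connection_matrix Gam x (s x)"
proof -
  have "(\<Sum>k\<in>UNIV. s x $ k * chr Gam x u (e j) $ k) = (u v* connection_matrix Gam x (s x)) $ j" for j
  proof -
    have "(\<Sum>k\<in>UNIV. s x $ k * chr Gam x u (e j) $ k) = s x \<bullet> chr Gam x u (e j)"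
      by (simp add: inner_vec_def)
    also have "\<dots> = (u v* connection_matrix Gam x (s x)) \<bullet> e j"
      by (simp add: inner_chr dot_lmul_matrix)
    finally show ?thesis by (simp add: inner_e)
  qed
  then show ?thesis by (simp add: cov_co_def vec_eq_iff)
qed

lemma horiz_iff: "(u, \<beta>) \<in> horiz Gam x p \<longleftrightarrow> \<beta> = u v* connection_matrix Gam x p"
proof
  assume "(u, \<beta>) \<in> horiz Gam x p"
  then show "\<beta> = u v* connection_matrix Gam x p" by (auto simp: horiz_def cov_co_eq)
next
  assume \<beta>: "\<beta> = u v* connection_matrix Gam x p"
  define s where "s y = (y - x) v* connection_matrix Gam x p + p" for y
  have "((\<lambda>y. (y - x) v* connection_matrix Gam x p) has_derivative (\<lambda>h. (h - 0) v* connection_matrix Gam x p)) (at x)"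
    by (intro bounded_linear.has_derivative[OF vector_matrix_mul_bounded_linear] derivative_intros)
  then have s': "(s has_derivative (\<lambda>h. h v* connection_matrix Gam x p)) (at x)"
    unfolding s_def by (simp add: has_derivative_add_const)
  then have "frechet_derivative s (at x) = (\<lambda>h. h v* connection_matrix Gam x p)"
    by (rule frechet_derivative_at[symmetric])
  moreover have "s x = p"
    by (simp add: s_def)
  ultimately have "s differentiable (at x) \<and> s x = p \<and> cov_co Gam s x u = 0 \<and> \<beta> = frechet_derivative s (at x) u"
    using s' \<beta> by (auto simp: differentiable_def cov_co_eq)
  then show "(u, \<beta>) \<in> horiz Gam x p"
    unfolding horiz_def by blast
qed

lemma Jhor_eq: "Jhor Gam J x p X = (J x *v fst X, (J x *v fst X) v* connection_matrix Gam x p)"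
  unfolding Jhor_def by (rule the_equality) (auto simp: horiz_iff)

lemma JG_eq: "JG Gam J x p (a, \<alpha>) =
   (J x *v a, (J x *v a) v* connection_matrix Gam x p + (\<alpha> - a v* connection_matrix Gam x p) v* J x)"
  (is "_ = ?W")
  unfolding JG_def
proof (rule the_equality)
  let ?\<Gamma> = "connection_matrix Gam x p"
  show "\<exists>X V. X \<in> horiz Gam x p \<and> fst V = 0 \<and> (a, \<alpha>) = X + V \<and>
      ?W = Jhor Gam J x p X + (0, transpose (J x) *v snd V)"
    by (intro exI[of _ "(a, a v* ?\<Gamma>)"] exI[of _ "(0, \<alpha> - a v* ?\<Gamma>)"]) (simp add: horiz_iff Jhor_eq)
next
  fix W
  assume "\<exists>X V. X \<in> horiz Gam x p \<and> fst V = 0 \<and> (a, \<alpha>) = X + V \<and>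
      W = Jhor Gam J x p X + (0, transpose (J x) *v snd V)"
  then show "W = ?W"
    by (force simp: horiz_iff Jhor_eq)
qed

lemma JG_coordinates: "JG Gam J x p (a, \<alpha>) =
    (J x *v a,
     (\<chi> i. \<Sum>j\<in>UNIV. (\<Sum>l\<in>UNIV. Gp Gam x p l i * J x $ l $ j - Gp Gam x p j l * J x $ l $ i) * a $ j)
     + transpose (J x) *v \<alpha>)"
  (is "_ = (_, ?L + _)")
proof -
  let ?\<Gamma> = "connection_matrix Gam x p"
  let ?M = "\<chi> i j. \<Sum>l\<in>UNIV. Gp Gam x p l i * J x $ l $ j - Gp Gam x p j l * J x $ l $ i"
  have "?L = ?M *v a"
    by (simp add: matrix_vector_mult_def)
  also have "?M = transpose ?\<Gamma> ** J x - transpose (?\<Gamma> ** J x)"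
    by (simp add: vec_eq_iff connection_matrix_def matrix_matrix_mult_def transpose_def sum_subtractf)
  also have "(transpose ?\<Gamma> ** J x - transpose (?\<Gamma> ** J x)) *v a = (J x *v a) v* ?\<Gamma> - (a v* ?\<Gamma>) v* J x"
    by (simp add: matrix_vector_mult_diff_rdistrib matrix_vector_mul_assoc[symmetric] vector_matrix_mul_assoc
        del: transpose_matrix_vector) simp
  finally show ?thesis
    by (simp add: JG_eq vector_matrix_mult_diff_rdistrib algebra_simps)
qed

lemma omega_st_eq: "omega_st C (b, \<beta>) = snd C \<bullet> b - \<beta> \<bullet> fst C"
  by (simp add: omega_st_def inner_vec_def sum_subtractf)

lemma omega_st_nondegenerate:
  assumes "\<And>B. omega_st C B = omega_st C' B"
  shows "C = C'"
proof -
  have "snd C $ i = snd C' $ i" "fst C $ i = fst C' $ i" for i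
    using assms[of "(e i, 0)"] assms[of "(0, e i)"] by (simp_all add: omega_st_eq inner_e)
  then show ?thesis by (simp add: prod_eq_iff vec_eq_iff)
qed

lemma dtheta_eq:
  "dtheta J x p (a, \<alpha>) (b, \<beta>) =
     (p v* frechet_derivative J (at x) a + \<alpha> v* J x) \<bullet> b
   - (p v* frechet_derivative J (at x) b + \<beta> v* J x) \<bullet> a"
  by (simp add: dtheta_def inner_vec_def vector_matrix_mult_def sum_subtractf mult.commute)

text \<open>The terms with the derivative of J make up the lower-left block p_k(\<partial>_j J^k_i - \<partial>_i J^k_j) of J^c.\<close>

lemma Jc_eq:
  assumes "linear (frechet_derivative J (at x))"
  shows "Jc J x p (a, \<alpha>) = (J x *v a,
     p v* frechet_derivative J (at x) a + \<alpha> v* J x - (\<chi> i. p \<bullet> (frechet_derivative J (at x) (e i) *v a)))"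
    (is "_ = ?C")
proof -
  let ?D = "frechet_derivative J (at x)"
  have dtheta: "dtheta J x p (a, \<alpha>) B = omega_st ?C B" for B
  proof -
    obtain b \<beta> where B: "B = (b, \<beta>)" by fastforce
    have "(p v* ?D b) \<bullet> a = p \<bullet> (?D b *v a)"
      by (rule dot_lmul_matrix)
    also have "\<dots> = (\<chi> i. p \<bullet> (?D (e i) *v a)) \<bullet> b"
      by (rule linear_functional_eq_inner[OF linear_inner_matrix_apply[OF assms]])
    finally show ?thesis
      by (simp add: B dtheta_eq omega_st_eq dot_lmul_matrix inner_diff_left inner_add_left)
  qed
  show ?thesis
    unfolding Jc_def by (rule the_equality) (auto simp: dtheta intro!: omega_st_nondegenerate)
qed

lemma S_tensor_eq:
  assumes "J differentiable (at x)"
  shows "S_tensor Gam J x u v = frechet_derivative J (at x) v *v u - frechet_derivative J (at x) u *v v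
     + chr Gam x (J x *v u) v - chr Gam x u (J x *v v)"
  by (simp add: S_tensor_def nablaJ_field_def torsion_field_def cov_def
      frechet_derivative_matrix_vector_mult[OF assms] matrix_vector_mult_diff_distrib)

lemma inner_S_tensor:
  assumes "J differentiable (at x)"
  shows "p \<bullet> S_tensor Gam J x u v = p \<bullet> (frechet_derivative J (at x) v *v u) - p \<bullet> (frechet_derivative J (at x) u *v v)
     + (J x *v u) \<bullet> (connection_matrix Gam x p *v v) - u \<bullet> (connection_matrix Gam x p *v (J x *v v))"
  by (simp add: S_tensor_eq[OF assms] inner_diff_right inner_add_right inner_chr)

lemma linear_inner_S_tensor:
  assumes "J differentiable (at x)"
  shows "linear (\<lambda>u. p \<bullet> S_tensor Gam J x u v)"
proof -
  note D = linear_frechet_derivative[OF assms]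
  show ?thesis
    unfolding inner_S_tensor[OF assms]
    by (rule linearI) (simp_all add: linear_add[OF D] linear_scale[OF D] scaleR_matrix_vector_assoc[symmetric]
        matrix_vector_mult_scaleR inner_add_left inner_add_right algebra_simps)
qed

lemma gamma_op_eq:
  assumes "\<And>v. linear (\<lambda>u. p \<bullet> R u v)"
  shows "gamma_op R p (a, \<alpha>) = (0, \<chi> j. p \<bullet> R a (e j))"
proof -
  have "(\<Sum>i\<in>UNIV. \<Sum>k\<in>UNIV. p $ k * R (e i) (e j) $ k * a $ i) = (\<chi> i. p \<bullet> R (e i) (e j)) \<bullet> a" for j
    by (simp add: inner_vec_def sum_distrib_left mult_ac)
  then show ?thesis
    by (simp add: gamma_op_def linear_functional_eq_inner[OF assms, symmetric])
qed

lemma JG_eq_Jc_plus_gamma_S: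
  assumes "J differentiable (at x)"
  shows "JG Gam J x p Z = Jc J x p Z + gamma_op (S_tensor Gam J x) p Z"
proof -
  obtain a \<alpha> where Z: "Z = (a, \<alpha>)" by fastforce
  let ?D = "frechet_derivative J (at x)" and ?\<Gamma> = "connection_matrix Gam x p"
  have Jc: "Jc J x p (a, \<alpha>) = (J x *v a, p v* ?D a + \<alpha> v* J x - (\<chi> j. p \<bullet> (?D (e j) *v a)))"
    by (rule Jc_eq[OF linear_frechet_derivative[OF assms]])
  have "gamma_op (S_tensor Gam J x) p Z = (0, \<chi> j. p \<bullet> S_tensor Gam J x a (e j))"
    by (simp add: Z gamma_op_eq linear_inner_S_tensor[OF assms])
  also have "\<dots> = (0, (\<chi> j. p \<bullet> (?D (e j) *v a)) - p v* ?D a + (J x *v a) v* ?\<Gamma> - a v* (?\<Gamma> ** J x))"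
    by (simp add: inner_S_tensor[OF assms] inner_matrix_vector_e matrix_vector_mul_assoc vec_eq_iff)
  finally show ?thesis
    by (simp add: Z Jc JG_eq vector_matrix_mult_diff_rdistrib vector_matrix_mul_assoc)
qed

theorem proposition2p6:
  fixes J :: "'n::finite almost_cx" and Gam :: "'n christoffel"
    and U :: "(real^'n) set" and x p :: "real^'n"
  assumes "open U" and "x \<in> U"
    and "\<forall>y\<in>U. J y ** J y = - mat 1"
    and "\<forall>y\<in>U. J differentiable (at y)"
  shows "(\<forall>a \<alpha>. JG Gam J x p (a, \<alpha>) =
            (J x *v a,
             (\<chi> i. \<Sum>j\<in>UNIV. (\<Sum>l\<in>UNIV. Gp Gam x p l i * J x $ l $ j - Gp Gam x p j l * J x $ l $ i) * a $ j)
             + transpose (J x) *v \<alpha>))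
       \<and> (\<forall>Z. JG Gam J x p Z = Jc J x p Z + gamma_op (S_tensor Gam J x) p Z)"
  using JG_coordinates JG_eq_Jc_plus_gamma_S assms(2,4) by blast

end
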